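(* Let $m\ge1$ and let $X_1,\dots,X_m$ be independent random variables, $X_i$ geometric with success probability $p_i\in(0,1]$. Let $Y_1,\dots,Y_m$ be i.i.d. geometric random variables with success probability $\bar p=\frac1m\sum_{i=1}^mp_i$, independent of $X_1,\dots,X_m$. Then for every positive integer $j$, $$\mathbb{P}\Big(\sum_{i=1}^mX_i\ge j\Big)\ge\mathbb{P}\Big(\sum_{i=1}^mY_i\ge j\Big).$$
   Context: A random variable $Y$ is geometric with success probability $p$ if $\mathbb{P}(Y=s)=(1-p)^{s-1}p$ for $s=1,2,\dots$. *)

theory Defs
  imports "HOL-Probability.Probability"
begin

definition geometric_rv :: "'a measure \<Rightarrow> ('a \<Rightarrow> nat) \<Rightarrow> real \<Rightarrow> bool" where
  "geometric_rv M X p \<longleftrightarrow>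
     X \<in> measurable M (count_space UNIV) \<and>
     (\<forall>s::nat. s \<ge> 1 \<longrightarrow> measure M {\<omega> \<in> space M. X \<omega> = s} = (1 - p) ^ (s - 1) * p)"

end

(*
  For independent geometric variables with parameters a, b and x = 1 - a, y = 1 - b,
  P(G_a + G_b \<le> k + 2) = 1 - (h_{k+1}(y, x) - x y h_k(y, x)) with h_k the complete
  homogeneous symmetric polynomial. Writing x = s - t, y = s + t, this is a polynomial in s and
  u = t^2 that is nonincreasing in u for fixed s: replacing two parameters by a closer pair
  with the same sum raises the distribution function of their sum, and hence of the whole
  sum, since convolution with an independent summand preserves the stochastic order.
  Moving a parameter below the mean up to the mean at the expense of one above it fixes one
  more coordinate, so finitely many such steps reach the constant parameter vector.
*)
theory Submission
  imports Defs
begin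

definition shifted_geometric_pmf :: "real \<Rightarrow> nat pmf" where
  "shifted_geometric_pmf p = map_pmf Suc (geometric_pmf p)"

lemma pmf_shifted_geometric_pmf:
  assumes "0 < p" "p \<le> 1"
  shows "pmf (shifted_geometric_pmf p) s = (if s = 0 then 0 else (1 - p) ^ (s - 1) * p)"
proof (cases s)
  case 0
  then show ?thesis unfolding shifted_geometric_pmf_def by (auto intro!: pmf_map_outside)
next
  case (Suc k)
  then show ?thesis unfolding shifted_geometric_pmf_def using assms by (simp add: pmf_map_inj')
qed

lemma prob_shifted_geometric_pmf_atMost:
  assumes "0 < p" "p \<le> 1"
  shows "measure_pmf.prob (shifted_geometric_pmf p) {..k} = 1 - (1 - p) ^ k"
proof -
  have "measure_pmf.prob (shifted_geometric_pmf p) {..k} = (\<Sum>s\<le>k. pmf (shifted_geometric_pmf p) s)"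
    by (simp add: measure_measure_pmf_finite)
  also have "\<dots> = 1 - (1 - p) ^ k"
    by (induction k) (auto simp: pmf_shifted_geometric_pmf[OF assms] algebra_simps)
  finally show ?thesis .
qed

definition add_pmf :: "nat pmf \<Rightarrow> nat pmf \<Rightarrow> nat pmf" where
  "add_pmf A B = map_pmf (\<lambda>(a, b). a + b) (pair_pmf A B)"

lemma add_pmf_assoc: "add_pmf A (add_pmf B C) = add_pmf (add_pmf A B) C"
  unfolding add_pmf_def pair_pmf_def
  by (simp add: map_bind_pmf bind_map_pmf bind_assoc_pmf bind_return_pmf map_return_pmf add.assoc)

lemma prob_add_pmf_atMost:
  "measure_pmf.prob (add_pmf A B) {..n} = (\<Sum>r\<le>n. pmf B r * measure_pmf.prob A {..n - r})"
proof -
  let ?T = "{(a, b). a + b \<le> n}"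
  have T: "?T = (\<lambda>(r, a). (a, r)) ` (SIGMA r:{..n}. {..n - r})" by force
  have "measure_pmf.prob (add_pmf A B) {..n} = measure_pmf.prob (pair_pmf A B) ?T"
    unfolding add_pmf_def by (simp add: vimage_def split_def)
  also have "\<dots> = (\<Sum>x\<in>?T. pmf (pair_pmf A B) x)"
    by (subst measure_measure_pmf_finite) (auto simp: T)
  also have "\<dots> = (\<Sum>(r, a)\<in>(SIGMA r:{..n}. {..n - r}). pmf A a * pmf B r)"
    by (subst T, subst sum.reindex) (auto simp: inj_on_def pmf_pair case_prod_beta)
  also have "\<dots> = (\<Sum>r\<le>n. pmf B r * (\<Sum>a\<le>n - r. pmf A a))"
    by (subst sum.Sigma[symmetric]) (auto simp: sum_distrib_left mult.commute)
  also have "\<dots> = (\<Sum>r\<le>n. pmf B r * measure_pmf.prob A {..n - r})"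
    by (simp add: measure_measure_pmf_finite)
  finally show ?thesis .
qed

lemma prob_add_pmf_atMost_mono:
  assumes "\<And>k. measure_pmf.prob A {..k} \<le> measure_pmf.prob A' {..k}"
  shows "measure_pmf.prob (add_pmf A B) {..n} \<le> measure_pmf.prob (add_pmf A' B) {..n}"
  unfolding prob_add_pmf_atMost by (intro sum_mono mult_left_mono assms) auto

definition sum_pmf :: "'i set \<Rightarrow> ('i \<Rightarrow> nat pmf) \<Rightarrow> nat pmf" where
  "sum_pmf I G = map_pmf (\<lambda>f. \<Sum>i\<in>I. f i) (Pi_pmf I 0 G)"

lemma sum_pmf_cong: "(\<And>i. i \<in> I \<Longrightarrow> G i = G' i) \<Longrightarrow> sum_pmf I G = sum_pmf I G'"
  unfolding sum_pmf_def by (simp cong: Pi_pmf_cong)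

lemma sum_pmf_empty [simp]: "sum_pmf {} G = return_pmf 0"
  by (simp add: sum_pmf_def)

lemma sum_pmf_insert:
  assumes "finite I" "i \<notin> I"
  shows "sum_pmf (insert i I) G = add_pmf (G i) (sum_pmf I G)"
proof -
  have "(\<Sum>j\<in>insert i I. (f(i := y)) j) = y + sum f I" for f and y :: nat
    using assms by (auto intro!: sum.cong)
  then have "sum_pmf (insert i I) G
      = map_pmf (\<lambda>(y, f). y + (\<Sum>j\<in>I. f j)) (pair_pmf (G i) (Pi_pmf I 0 G))"
    unfolding sum_pmf_def Pi_pmf_insert[OF assms] map_pmf_comp
    by (intro map_pmf_cong) (auto simp del: fun_upd_apply)
  also have "\<dots> = add_pmf (G i) (sum_pmf I G)"
    unfolding add_pmf_def sum_pmf_def by (simp add: pair_map_pmf2 map_pmf_comp split_def)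
  finally show ?thesis .
qed

definition hsym2 :: "real \<Rightarrow> real \<Rightarrow> nat \<Rightarrow> real" where
  "hsym2 x y k = (\<Sum>i\<le>k. x ^ i * y ^ (k - i))"

lemma hsym2_0 [simp]: "hsym2 x y 0 = 1"
  by (simp add: hsym2_def)

lemma hsym2_Suc: "hsym2 x y (Suc k) = x ^ Suc k + y * hsym2 x y k"
proof -
  have "(\<Sum>i\<le>k. x ^ i * y ^ (Suc k - i)) = y * hsym2 x y k"
    unfolding hsym2_def sum_distrib_left by (intro sum.cong) (auto simp: Suc_diff_le)
  then show ?thesis by (simp add: hsym2_def)
qed

lemma hsym2_Suc_Suc: "hsym2 x y (Suc (Suc k)) = (x + y) * hsym2 x y (Suc k) - x * y * hsym2 x y k"
  using hsym2_Suc[of x y "Suc k"] hsym2_Suc[of x y k] by (simp add: algebra_simps)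

(* h_k(s + t, s - t) as a polynomial in s and u = t^2, from h_{k+2} = (x + y) h_{k+1} - x y h_k. *)
fun hsym2_mean :: "real \<Rightarrow> real \<Rightarrow> nat \<Rightarrow> real" where
  "hsym2_mean s u 0 = 1"
| "hsym2_mean s u (Suc 0) = 2 * s"
| "hsym2_mean s u (Suc (Suc k)) = 2 * s * hsym2_mean s u (Suc k) - (s\<^sup>2 - u) * hsym2_mean s u k"

lemma hsym2_eq_hsym2_mean: "hsym2 (s + t) (s - t) k = hsym2_mean s (t\<^sup>2) k"
proof (induction s "t\<^sup>2" k rule: hsym2_mean.induct)
  case (2 s)
  then show ?case by (simp add: hsym2_Suc)
next
  case (3 s k)
  then show ?case by (simp add: hsym2_Suc_Suc power2_eq_square algebra_simps)
qed simp

(* The increment D k = H (k + 1) - s H k is carried along since D (k + 1) = s D k + u H k. *)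
lemma hsym2_mean_mono:
  assumes "0 \<le> s" "0 \<le> u" "u \<le> u'"
  shows "0 \<le> hsym2_mean s u k \<and> hsym2_mean s u k \<le> hsym2_mean s u' k \<and>
         0 \<le> hsym2_mean s u (Suc k) - s * hsym2_mean s u k \<and>
         hsym2_mean s u (Suc k) - s * hsym2_mean s u k \<le> hsym2_mean s u' (Suc k) - s * hsym2_mean s u' k"
proof (induction k)
  case 0
  then show ?case using assms by simp
next
  case (Suc k)
  let ?H = "hsym2_mean s" and ?D = "\<lambda>v k. hsym2_mean s v (Suc k) - s * hsym2_mean s v k"
  have D_Suc: "?D v (Suc k) = s * ?D v k + v * ?H v k" for v
    by (simp add: power2_eq_square algebra_simps)
  from Suc have IH: "0 \<le> ?H u k" "?H u k \<le> ?H u' k" "0 \<le> ?D u k" "?D u k \<le> ?D u' k"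
    by auto
  have "s * ?D u k \<le> s * ?D u' k" "u * ?H u k \<le> u' * ?H u' k"
    using IH assms by (auto intro: mult_left_mono mult_mono)
  moreover have "0 \<le> s * ?H u k" "0 \<le> s * ?D u k" "0 \<le> u * ?H u k"
    using IH assms by simp_all
  moreover have "s * ?H u k \<le> s * ?H u' k"
    using IH assms by (auto intro: mult_left_mono)
  ultimately show ?case
    using D_Suc[of u] D_Suc[of u'] IH by (simp only: diff_add_cancel) linarith
qed

lemma hsym2_mean_tail_mono:
  assumes "0 \<le> s" "s \<le> 1" "0 \<le> u" "u \<le> u'"
  shows "hsym2_mean s u (Suc k) - (s\<^sup>2 - u) * hsym2_mean s u k
       \<le> hsym2_mean s u' (Suc k) - (s\<^sup>2 - u') * hsym2_mean s u' k"
proof -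
  let ?H = "hsym2_mean s"
  have split: "?H v (Suc k) - (s\<^sup>2 - v) * ?H v k
      = s * (1 - s) * ?H v k + (?H v (Suc k) - s * ?H v k) + v * ?H v k" for v
    by (simp add: power2_eq_square algebra_simps)
  note mono = hsym2_mean_mono[OF assms(1,3,4), of k]
  have "s * (1 - s) * ?H u k \<le> s * (1 - s) * ?H u' k"
    using mono assms by (intro mult_left_mono) auto
  moreover have "u * ?H u k \<le> u' * ?H u' k"
    using mono assms by (intro mult_mono) auto
  ultimately show ?thesis unfolding split using mono by linarith
qed

lemma prob_add_shifted_geometric_atMost_Suc:
  assumes "0 < a" "a \<le> 1" "0 < b" "b \<le> 1"
  shows "measure_pmf.prob (add_pmf (shifted_geometric_pmf a) (shifted_geometric_pmf b)) {..Suc m}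
       = 1 - (1 - b) ^ Suc m - b * hsym2 (1 - b) (1 - a) m"
proof -
  let ?x = "1 - a" and ?y = "1 - b"
  have "measure_pmf.prob (add_pmf (shifted_geometric_pmf a) (shifted_geometric_pmf b)) {..Suc m}
      = (\<Sum>r\<le>Suc m. pmf (shifted_geometric_pmf b) r * (1 - ?x ^ (Suc m - r)))"
    unfolding prob_add_pmf_atMost using assms by (simp add: prob_shifted_geometric_pmf_atMost)
  also have "\<dots> = (\<Sum>r\<le>m. b * ?y ^ r * (1 - ?x ^ (m - r)))"
    by (subst sum.atMost_Suc_shift) (simp add: pmf_shifted_geometric_pmf assms mult.commute)
  also have "\<dots> = (\<Sum>r\<le>m. b * ?y ^ r) - b * hsym2 ?y ?x m"
    by (simp add: hsym2_def sum_subtractf sum_distrib_left algebra_simps)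
  also have "(\<Sum>r\<le>m. b * ?y ^ r) = 1 - ?y ^ Suc m"
    by (induction m) (auto simp: algebra_simps)
  finally show ?thesis .
qed

lemma prob_add_shifted_geometric_atMost_Suc_Suc:
  assumes "0 < a" "a \<le> 1" "0 < b" "b \<le> 1"
  defines "s \<equiv> 1 - (a + b) / 2" and "u \<equiv> ((a - b) / 2)\<^sup>2"
  shows "measure_pmf.prob (add_pmf (shifted_geometric_pmf a) (shifted_geometric_pmf b)) {..Suc (Suc k)}
       = 1 - (hsym2_mean s u (Suc k) - (s\<^sup>2 - u) * hsym2_mean s u k)"
proof -
  let ?t = "(a - b) / 2" and ?x = "1 - a" and ?y = "1 - b"
  have xy: "?x = s - ?t" "?y = s + ?t"
    unfolding s_def by (auto simp: field_simps)
  have "1 - ?y ^ Suc (Suc k) - b * hsym2 ?y ?x (Suc k)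
      = 1 - (hsym2 ?y ?x (Suc k) - ?x * ?y * hsym2 ?y ?x k)"
    unfolding hsym2_Suc[of ?y ?x k] by (simp add: algebra_simps)
  also have "\<dots> = 1 - (hsym2_mean s u (Suc k) - (s\<^sup>2 - u) * hsym2_mean s u k)"
    unfolding xy hsym2_eq_hsym2_mean u_def by (simp add: power2_eq_square algebra_simps)
  finally show ?thesis
    using prob_add_shifted_geometric_atMost_Suc[OF assms(1-4), of "Suc k"] by simp
qed

lemma prob_add_shifted_geometric_atMost_le:
  assumes "0 < a" "a \<le> 1" "0 < b" "b \<le> 1" "0 < c" "c \<le> 1" "0 < d" "d \<le> 1"
    and "a + b = c + d" and "\<bar>c - d\<bar> \<le> \<bar>a - b\<bar>"
  shows "measure_pmf.prob (add_pmf (shifted_geometric_pmf a) (shifted_geometric_pmf b)) {..n}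
       \<le> measure_pmf.prob (add_pmf (shifted_geometric_pmf c) (shifted_geometric_pmf d)) {..n}"
proof (cases n)
  case 0
  then show ?thesis unfolding prob_add_pmf_atMost by (simp add: pmf_shifted_geometric_pmf assms)
next
  case (Suc m)
  show ?thesis
  proof (cases m)
    case 0
    then show ?thesis using \<open>n = Suc m\<close> assms by (simp add: prob_add_shifted_geometric_atMost_Suc)
  next
    case (Suc k)
    have "0 \<le> 1 - (a + b) / 2" "1 - (a + b) / 2 \<le> 1" using assms by auto
    moreover have "((c - d) / 2)\<^sup>2 \<le> ((a - b) / 2)\<^sup>2"
      using assms(10) by (simp add: power_divide abs_le_square_iff)
    ultimately show ?thesis
      using hsym2_mean_tail_mono[of "1 - (a + b) / 2" "((c - d) / 2)\<^sup>2" "((a - b) / 2)\<^sup>2" k]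
      unfolding \<open>n = Suc m\<close> \<open>m = Suc k\<close> using assms
      by (simp add: prob_add_shifted_geometric_atMost_Suc_Suc)
  qed
qed

lemma prob_sum_shifted_geometric_transfer:
  fixes q :: "'i \<Rightarrow> real"
  assumes I: "finite I" "i \<in> I" "k \<in> I" "i \<noteq> k"
    and q: "\<forall>j\<in>I. 0 < q j \<and> q j \<le> 1" and "0 < a" "a \<le> 1" "0 < b" "b \<le> 1"
    and "a + b = q i + q k" "\<bar>a - b\<bar> \<le> \<bar>q i - q k\<bar>"
  shows "measure_pmf.prob (sum_pmf I (\<lambda>j. shifted_geometric_pmf (q j))) {..n}
       \<le> measure_pmf.prob (sum_pmf I (\<lambda>j. shifted_geometric_pmf ((q(i := a, k := b)) j))) {..n}"
proof -
  define R where "R = I - {i, k}"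
  have split: "sum_pmf I G = add_pmf (add_pmf (G i) (G k)) (sum_pmf R G)" for G
  proof -
    have "I = insert i (insert k R)" "i \<notin> insert k R" "k \<notin> R" "finite R"
      using I unfolding R_def by auto
    then show ?thesis by (simp add: sum_pmf_insert add_pmf_assoc)
  qed
  have "sum_pmf R (\<lambda>j. shifted_geometric_pmf ((q(i := a, k := b)) j))
      = sum_pmf R (\<lambda>j. shifted_geometric_pmf (q j))"
    by (rule sum_pmf_cong) (simp add: R_def)
  moreover have "measure_pmf.prob (add_pmf (shifted_geometric_pmf (q i)) (shifted_geometric_pmf (q k))) {..m}
      \<le> measure_pmf.prob (add_pmf (shifted_geometric_pmf a) (shifted_geometric_pmf b)) {..m}" for m
    using assms by (intro prob_add_shifted_geometric_atMost_le) auto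
  ultimately show ?thesis
    unfolding split[of "\<lambda>j. shifted_geometric_pmf (q j)"] split[of "\<lambda>j. shifted_geometric_pmf ((q(i := a, k := b)) j)"]
    using \<open>i \<noteq> k\<close> by (simp add: prob_add_pmf_atMost_mono)
qed

lemma obtain_below_above_mean:
  fixes q :: "'i \<Rightarrow> real" and c :: real
  assumes "finite I" "(\<Sum>i\<in>I. q i) = c * card I" "\<exists>i\<in>I. q i \<noteq> c"
  obtains i k where "i \<in> I" "q i < c" "k \<in> I" "c < q k"
proof -
  have sum_const: "(\<Sum>_\<in>I. c) = (\<Sum>i\<in>I. q i)"
    using assms(2) by (simp add: mult.commute)
  have "\<exists>i\<in>I. q i < c"
  proof (rule ccontr)
    assume "\<not> ?thesis"
    then have "\<forall>i\<in>I. c \<le> q i" by (auto simp: not_less)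
    moreover from this assms(3) have "\<exists>i\<in>I. c < q i" by (auto simp: order.strict_iff_order)
    ultimately show False
      using sum_strict_mono_ex1[OF assms(1), of "\<lambda>_. c" q] sum_const by simp
  qed
  moreover have "\<exists>k\<in>I. c < q k"
  proof (rule ccontr)
    assume "\<not> ?thesis"
    then have "\<forall>k\<in>I. q k \<le> c" by (auto simp: not_less)
    with \<open>\<exists>i\<in>I. q i < c\<close> show False
      using sum_strict_mono_ex1[OF assms(1), of q "\<lambda>_. c"] sum_const by simp
  qed
  ultimately show ?thesis using that by blast
qed

lemma prob_sum_shifted_geometric_le_uniform:
  fixes q :: "'i \<Rightarrow> real" and c :: real
  assumes "finite I" and "\<forall>i\<in>I. 0 < q i \<and> q i \<le> 1" and "(\<Sum>i\<in>I. q i) = c * card I"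
  shows "measure_pmf.prob (sum_pmf I (\<lambda>i. shifted_geometric_pmf (q i))) {..n}
       \<le> measure_pmf.prob (sum_pmf I (\<lambda>_. shifted_geometric_pmf c)) {..n}"
  using assms(2,3)
proof (induction "card {i\<in>I. q i \<noteq> c}" arbitrary: q rule: less_induct)
  case (less q)
  show ?case
  proof (cases "\<forall>i\<in>I. q i = c")
    case True
    then show ?thesis by (simp cong: sum_pmf_cong)
  next
    case False
    then obtain i k where i: "i \<in> I" "q i < c" and k: "k \<in> I" "c < q k"
      using obtain_below_above_mean[OF assms(1) less.prems(2)] by blast
    then have ik: "i \<noteq> k" by auto
    define q' where "q' = q(i := c, k := q i + q k - c)"
    have q'_bounds: "\<forall>j\<in>I. 0 < q' j \<and> q' j \<le> 1"
      using less.prems(1) i k unfolding q'_def by force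
    have pair_out: "(\<Sum>j\<in>I. f j) = f i + f k + (\<Sum>j\<in>I - {i, k}. f j)" for f :: "'i \<Rightarrow> real"
      using assms(1) i k ik
      by (simp add: sum.remove[of I i] sum.remove[of "I - {i}" k] Diff_insert2[symmetric])
    have "(\<Sum>j\<in>I - {i, k}. q' j) = (\<Sum>j\<in>I - {i, k}. q j)"
      unfolding q'_def by (auto intro!: sum.cong)
    then have q'_sum: "(\<Sum>j\<in>I. q' j) = c * card I"
      using less.prems(2) ik unfolding pair_out[of q'] pair_out[of q] by (simp add: q'_def)
    have "{j\<in>I. q' j \<noteq> c} \<subseteq> {j\<in>I. q j \<noteq> c} - {i}"
      using k ik unfolding q'_def by auto
    also have "\<dots> \<subset> {j\<in>I. q j \<noteq> c}"
      using i by auto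
    finally have "card {j\<in>I. q' j \<noteq> c} < card {j\<in>I. q j \<noteq> c}"
      using assms(1) by (intro psubset_card_mono) auto
    note IH = less.hyps[OF this q'_bounds q'_sum]
    have "0 < c" "c \<le> 1" "0 < q i + q k - c" "q i + q k - c \<le> 1"
      using less.prems(1) i k by fastforce+
    moreover have "\<bar>c - (q i + q k - c)\<bar> \<le> \<bar>q i - q k\<bar>"
      using i k by linarith
    ultimately have "measure_pmf.prob (sum_pmf I (\<lambda>j. shifted_geometric_pmf (q j))) {..n}
        \<le> measure_pmf.prob (sum_pmf I (\<lambda>j. shifted_geometric_pmf (q' j))) {..n}"
      unfolding q'_def
      by (intro prob_sum_shifted_geometric_transfer assms(1) i(1) k(1) ik less.prems(1)) simp_all
    with IH show ?thesis by linarith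
  qed
qed

lemma measure_pmf_pair_pmf:
  fixes A :: "'a::countable pmf" and B :: "'b::countable pmf"
  shows "measure_pmf (pair_pmf A B) = measure_pmf A \<Otimes>\<^sub>M measure_pmf B"
proof (rule measure_eqI_countable[where A=UNIV])
  show "sets (measure_pmf A \<Otimes>\<^sub>M measure_pmf B) = Pow UNIV"
    using sets_pair_countable[of UNIV UNIV "measure_pmf A" "measure_pmf B"] by simp
  fix ab :: "'a \<times> 'b"
  obtain a b where ab: "ab = (a, b)" by (cases ab)
  have "emeasure (measure_pmf A \<Otimes>\<^sub>M measure_pmf B) ({a} \<times> {b}) = emeasure A {a} * emeasure B {b}"
    by (rule measure_pmf.emeasure_pair_measure_Times) auto
  then show "emeasure (measure_pmf (pair_pmf A B)) {ab} = emeasure (measure_pmf A \<Otimes>\<^sub>M measure_pmf B) {ab}"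
    by (simp add: ab emeasure_pmf_single pmf_pair ennreal_mult)
qed auto

lemma (in prob_space) distr_eq_measure_pmf:
  fixes X :: "'a \<Rightarrow> 'b::countable"
  assumes "random_variable (count_space UNIV) X"
    and "\<And>s. prob (X -` {s} \<inter> space M) = pmf P s"
  shows "distr M (count_space UNIV) X = measure_pmf P"
  by (rule measure_eqI_countable[where A=UNIV])
     (use assms in \<open>auto simp: emeasure_distr emeasure_pmf_single emeasure_eq_measure\<close>)

lemma (in prob_space) distr_geometric_rv:
  assumes X: "geometric_rv M X p" and p: "0 < p" "p \<le> 1"
  shows "distr M (count_space UNIV) X = measure_pmf (shifted_geometric_pmf p)"
proof (rule distr_eq_measure_pmf)
  show rv: "random_variable (count_space UNIV) X"
    using X by (simp add: geometric_rv_def)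
  let ?f = "\<lambda>s. prob (X -` {s} \<inter> space M)"
  have f_Suc: "?f (Suc s) = (1 - p) ^ s * p" for s
  proof -
    have "X -` {Suc s} \<inter> space M = {\<omega> \<in> space M. X \<omega> = Suc s}" by auto
    then show ?thesis using X unfolding geometric_rv_def by (metis diff_Suc_1 le_add1 plus_1_eq_Suc)
  qed
  have "?f sums prob (\<Union>s. X -` {s} \<inter> space M)"
    using rv by (intro finite_measure_UNION) (auto simp: disjoint_family_on_def)
  moreover have "(\<Union>s. X -` {s} \<inter> space M) = space M" by auto
  ultimately have "?f sums (1 - ?f 0 + ?f 0)" by (simp add: prob_space)
  then have "(\<lambda>s. ?f (Suc s)) sums (1 - ?f 0)"
    by (subst sums_Suc_iff)
  then have "(\<lambda>s. (1 - p) ^ s * p) sums (1 - ?f 0)"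
    by (simp only: f_Suc)
  moreover have "(\<lambda>s. (1 - p) ^ s * p) sums (1 / (1 - (1 - p)) * p)"
    using p by (intro sums_mult2 geometric_sums) auto
  ultimately have "?f 0 = 0" using p by (auto dest: sums_unique2)
  then show "?f s = pmf (shifted_geometric_pmf p) s" for s
    using f_Suc p by (cases s) (simp_all add: pmf_shifted_geometric_pmf)
qed

lemma (in prob_space) distr_add_indep:
  fixes X Y :: "'a \<Rightarrow> nat"
  assumes ind: "indep_var (count_space UNIV) X (count_space UNIV) Y"
    and X: "distr M (count_space UNIV) X = measure_pmf A"
    and Y: "distr M (count_space UNIV) Y = measure_pmf B"
  shows "distr M (count_space UNIV) (\<lambda>\<omega>. X \<omega> + Y \<omega>) = measure_pmf (add_pmf A B)"
proof -
  have joint: "distr M (count_space UNIV \<Otimes>\<^sub>M count_space UNIV) (\<lambda>\<omega>. (X \<omega>, Y \<omega>))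
      = measure_pmf (pair_pmf A B)"
    using ind unfolding indep_var_distribution_eq X Y measure_pmf_pair_pmf by simp
  have "random_variable (count_space UNIV \<Otimes>\<^sub>M count_space UNIV) (\<lambda>\<omega>. (X \<omega>, Y \<omega>))"
    using ind by (auto simp: indep_var_distribution_eq)
  then have "distr M (count_space UNIV) (\<lambda>\<omega>. X \<omega> + Y \<omega>)
      = distr (distr M (count_space UNIV \<Otimes>\<^sub>M count_space UNIV) (\<lambda>\<omega>. (X \<omega>, Y \<omega>)))
          (count_space UNIV) (\<lambda>(a, b). a + b)"
    by (subst distr_distr) (auto simp: pair_measure_countable comp_def)
  also have "\<dots> = measure_pmf (add_pmf A B)"
    unfolding joint add_pmf_def map_pmf_rep_eq ..
  finally show ?thesis .
qed

lemma (in prob_space) indep_sets_reindex: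
  assumes h: "inj_on h I" and ind: "indep_sets F (h ` I)"
  shows "indep_sets (\<lambda>i. F (h i)) I"
  unfolding indep_sets_def
proof (intro conjI ballI allI impI)
  show "F (h i) \<subseteq> events" if "i \<in> I" for i
    using ind that by (auto simp: indep_sets_def)
  fix J A assume J: "J \<subseteq> I" "J \<noteq> {}" "finite J" and A: "A \<in> (\<Pi> j\<in>J. F (h j))"
  define A' where "A' = (\<lambda>k. A (the_inv_into I h k))"
  have inv: "the_inv_into I h (h j) = j" if "j \<in> J" for j
    using J that by (intro the_inv_into_f_f[OF h]) auto
  have "A' \<in> (\<Pi> k\<in>h ` J. F k)"
    using A by (auto simp: A'_def inv)
  with J ind have "prob (\<Inter>k\<in>h ` J. A' k) = (\<Prod>k\<in>h ` J. prob (A' k))"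
    unfolding indep_sets_def by (metis finite_imageI image_is_empty image_mono)
  moreover have "inj_on h J" by (rule inj_on_subset[OF h J(1)])
  ultimately show "prob (\<Inter>j\<in>J. A j) = (\<Prod>j\<in>J. prob (A j))"
    by (simp add: A'_def inv prod.reindex)
qed

lemma (in prob_space) indep_vars_reindex:
  assumes "inj_on h I" "indep_vars M' X (h ` I)"
  shows "indep_vars (\<lambda>i. M' (h i)) (\<lambda>i. X (h i)) I"
  using assms indep_sets_reindex[of h I "\<lambda>k. {X k -` A \<inter> space M | A. A \<in> sets (M' k)}"]
  unfolding indep_vars_def2 by auto

lemma (in prob_space) distr_sum_indep:
  fixes W :: "'i \<Rightarrow> 'a \<Rightarrow> nat"
  assumes "finite I" and "indep_vars (\<lambda>_. count_space UNIV) W I"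
    and "\<And>i. i \<in> I \<Longrightarrow> distr M (count_space UNIV) (W i) = measure_pmf (G i)"
  shows "distr M (count_space UNIV) (\<lambda>\<omega>. \<Sum>i\<in>I. W i \<omega>) = measure_pmf (sum_pmf I G)"
  using assms
proof (induction I rule: finite_induct)
  case empty
  then show ?case by (simp add: return_pmf.rep_eq)
next
  case (insert i I)
  have "indep_var (count_space UNIV) ((\<lambda>f. f i) \<circ> (\<lambda>\<omega>. restrict (\<lambda>j. W j \<omega>) {i}))
      (count_space UNIV) ((\<lambda>f. \<Sum>j\<in>I. f j) \<circ> (\<lambda>\<omega>. restrict (\<lambda>j. W j \<omega>) I))"
    using insert.hyps by (intro indep_var_compose[OF indep_var_restrict[OF insert.prems(1)]]) auto
  then have "indep_var (count_space UNIV) (W i) (count_space UNIV) (\<lambda>\<omega>. \<Sum>j\<in>I. W j \<omega>)"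
    by (simp add: comp_def cong: sum.cong)
  moreover have "indep_vars (\<lambda>_. count_space UNIV) W I"
    using insert.prems(1) by (rule indep_vars_subset) auto
  ultimately show ?case
    using insert by (simp add: sum_pmf_insert distr_add_indep)
qed

lemma (in prob_space) indep_vars_case_sum:
  assumes "indep_vars (\<lambda>_. N) (case_sum X Y) (I <+> J)"
  shows "indep_vars (\<lambda>_. N) X I" and "indep_vars (\<lambda>_. N) Y J"
  using indep_vars_reindex[of Inl I, OF _ indep_vars_subset[OF assms]]
    indep_vars_reindex[of Inr J, OF _ indep_vars_subset[OF assms]]
  by auto

lemma (in prob_space) prob_sum_geometric_ge:
  fixes W :: "'i \<Rightarrow> 'a \<Rightarrow> nat"
  assumes "finite I" and "indep_vars (\<lambda>_. count_space UNIV) W I"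
    and geometric: "\<And>i. i \<in> I \<Longrightarrow> geometric_rv M (W i) (q i) \<and> 0 < q i \<and> q i \<le> 1"
    and "1 \<le> j"
  shows "prob {\<omega> \<in> space M. (\<Sum>i\<in>I. W i \<omega>) \<ge> j}
       = 1 - measure_pmf.prob (sum_pmf I (\<lambda>i. shifted_geometric_pmf (q i))) {..j - 1}"
proof -
  have "random_variable (count_space UNIV) (W i)" if "i \<in> I" for i
    using geometric[OF that] unfolding geometric_rv_def by blast
  then have rv: "random_variable (count_space UNIV) (\<lambda>\<omega>. \<Sum>i\<in>I. W i \<omega>)"
    by measurable
  have "{\<omega> \<in> space M. (\<Sum>i\<in>I. W i \<omega>) \<ge> j} = (\<lambda>\<omega>. \<Sum>i\<in>I. W i \<omega>) -` (UNIV - {..j - 1}) \<inter> space M"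
    using assms(4) by auto
  also have "prob \<dots> = measure (distr M (count_space UNIV) (\<lambda>\<omega>. \<Sum>i\<in>I. W i \<omega>)) (UNIV - {..j - 1})"
    by (rule measure_distr[OF rv, symmetric]) simp
  also have "distr M (count_space UNIV) (\<lambda>\<omega>. \<Sum>i\<in>I. W i \<omega>)
      = measure_pmf (sum_pmf I (\<lambda>i. shifted_geometric_pmf (q i)))"
    using assms by (intro distr_sum_indep distr_geometric_rv) auto
  finally show ?thesis
    using measure_pmf.prob_compl[of "{..j - 1}"] by simp
qed

theorem corollaryB5:
  fixes M :: "'a measure" and X Y :: "nat \<Rightarrow> 'a \<Rightarrow> nat" and p :: "nat \<Rightarrow> real"
    and m j :: nat
  assumes "prob_space M"
    and "m \<ge> 1"
    and "\<And>i. i < m \<Longrightarrow> 0 < p i \<and> p i \<le> 1"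
    and "\<And>i. i < m \<Longrightarrow> geometric_rv M (X i) (p i)"
    and "\<And>i. i < m \<Longrightarrow> geometric_rv M (Y i) ((\<Sum>k<m. p k) / real m)"
    and "prob_space.indep_vars M (\<lambda>_. count_space UNIV) (case_sum X Y) ({..<m} <+> {..<m})"
    and "j \<ge> 1"
  shows "measure M {\<omega> \<in> space M. (\<Sum>i<m. X i \<omega>) \<ge> j}
           \<ge> measure M {\<omega> \<in> space M. (\<Sum>i<m. Y i \<omega>) \<ge> j}"
proof -
  interpret prob_space M by (rule assms(1))
  define c where "c = (\<Sum>k<m. p k) / real m"
  have "0 < (\<Sum>k<m. p k)"
    using assms(2,3) by (intro sum_pos) (auto simp: lessThan_empty_iff)
  moreover have "(\<Sum>k<m. p k) \<le> (\<Sum>k<m. 1)"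
    using assms(3) by (intro sum_mono) auto
  ultimately have c: "0 < c" "c \<le> 1" and c_mean: "(\<Sum>i<m. p i) = c * card {..<m}"
    using assms(2) by (auto simp: c_def field_simps)
  note indep = indep_vars_case_sum[OF assms(6)]
  have "prob {\<omega> \<in> space M. (\<Sum>i<m. X i \<omega>) \<ge> j}
      = 1 - measure_pmf.prob (sum_pmf {..<m} (\<lambda>i. shifted_geometric_pmf (p i))) {..j - 1}"
    using assms(3,4,7) by (intro prob_sum_geometric_ge indep) auto
  moreover have "prob {\<omega> \<in> space M. (\<Sum>i<m. Y i \<omega>) \<ge> j}
      = 1 - measure_pmf.prob (sum_pmf {..<m} (\<lambda>_. shifted_geometric_pmf c)) {..j - 1}"
    using assms(5,7) c by (intro prob_sum_geometric_ge indep) (auto simp: c_def)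
  moreover have "measure_pmf.prob (sum_pmf {..<m} (\<lambda>i. shifted_geometric_pmf (p i))) {..j - 1}
      \<le> measure_pmf.prob (sum_pmf {..<m} (\<lambda>_. shifted_geometric_pmf c)) {..j - 1}"
    using assms(3) c_mean by (intro prob_sum_shifted_geometric_le_uniform) auto
  ultimately show ?thesis by linarith
qed

end
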